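(* Let $f\in C^1[0,1]$ with $f(0)=0$, $h:=f'$, and $q$ satisfying (q). For every $c\in\mathbb R$ the problem: $\zeta\in C[0,1]\cap C^1(0,1)$, $\dot\zeta(\varphi)=h(\varphi)-c-q(\varphi)/\zeta(\varphi)$ and $\zeta(\varphi)<0$ for $\varphi\in(0,1)$, $\zeta(1)=0$, admits a unique solution $\zeta_c$. If $c\ge c^*$ then $\zeta_c(0)=0$, and if $c<c^*$ then $\zeta_c(0)<0$. Moreover: (i) if $c_2>c_1$ then $\zeta_{c_2}>\zeta_{c_1}$ on $(0,1)$; (ii) $z^*(\varphi)=\lim_{c\to c^*}\zeta_c(\varphi)$ for every $\varphi\in[0,1]$.
   Context: Condition (q): $q\in C[0,1]$, $q>0$ on $(0,1)$, $q(0)=q(1)=0$, and $\limsup_{\varphi\to0^+}q(\varphi)/\varphi<+\infty$. $c^*$ denotes the real number such that there exists $z\in C[0,1]\cap C^1(0,1)$ with $\dot z=h-c-q/z$ and $z<0$ on $(0,1)$, and $z(0)=z(1)=0$, if and only if $c\ge c^*$ (such $z$ then being unique); $z^*$ denotes this unique function for $c=c^*$. *)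

theory Defs
  imports "HOL-Analysis.Analysis" "HOL-Library.Liminf_Limsup"
begin

definition cond_q :: "(real \<Rightarrow> real) \<Rightarrow> bool" where
  "cond_q q \<longleftrightarrow> continuous_on {0..1} q \<and> (\<forall>x\<in>{0<..<1}. q x > 0) \<and> q 0 = 0 \<and> q 1 = 0
     \<and> Limsup (at_right 0) (\<lambda>x. ereal (q x / x)) < \<infinity>"

definition is_sol :: "(real \<Rightarrow> real) \<Rightarrow> (real \<Rightarrow> real) \<Rightarrow> real \<Rightarrow> (real \<Rightarrow> real) \<Rightarrow> bool" where
  "is_sol h q c z \<longleftrightarrow> continuous_on {0..1} z
     \<and> (\<forall>x\<in>{0<..<1}. (z has_real_derivative (h x - c - q x / z x)) (at x))
     \<and> continuous_on {0<..<1} (deriv z)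
     \<and> (\<forall>x\<in>{0<..<1}. z x < 0) \<and> z 1 = 0"

definition is_sol0 :: "(real \<Rightarrow> real) \<Rightarrow> (real \<Rightarrow> real) \<Rightarrow> real \<Rightarrow> (real \<Rightarrow> real) \<Rightarrow> bool" where
  "is_sol0 h q c z \<longleftrightarrow> is_sol h q c z \<and> z 0 = 0"

end

theory Submission
  imports Defs
begin

text \<open>Solutions of \<open>\<zeta>' = h - c - q / \<zeta>\<close> with \<open>\<zeta> < 0\<close> and \<open>\<zeta>(1) = 0\<close> are compared by a one-sided
  principle: a difference that is \<open>\<le> 0\<close> at the right end and cannot decrease where it is positive
  stays \<open>\<le> 0\<close>. Applied to \<open>\<zeta>\<^sub>1 - \<zeta>\<^sub>2\<close> and to \<open>\<zeta>\<^sub>2 - (c\<^sub>2 - c\<^sub>1)(1 - \<phi>) - \<zeta>\<^sub>1\<close>, this gives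
  uniqueness, monotonicity in \<open>c\<close> and \<open>|\<zeta>\<^sub>c\<^sub>1 - \<zeta>\<^sub>c\<^sub>2| \<le> |c\<^sub>1 - c\<^sub>2|\<close>, hence continuity in \<open>c\<close>.
  For \<open>c \<ge> c\<^sup>*\<close> a solution exists by the definition of \<open>c\<^sup>*\<close>; for \<open>c < c\<^sup>*\<close> one is the decreasing
  limit of Picard solutions of truncated problems whose denominators are capped below the
  supersolution \<open>z\<^sup>*\<close>, which then also bounds the limit from above. Finally
  \<open>\<zeta>\<^sub>c(0) \<le> z\<^sup>*(0) = 0\<close> for \<open>c < c\<^sup>*\<close>, and equality would make \<open>\<zeta>\<^sub>c\<close> a two-point solution.\<close>

section \<open>Comparison of solutions\<close>

lemma nonpos_from_right_endpoint:
  fixes D :: "real \<Rightarrow> real"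
  assumes cont: "continuous_on {a..b} D" and Db: "D b \<le> 0"
    and deriv: "\<And>y. y \<in> {a<..<b} \<Longrightarrow> D y > 0 \<Longrightarrow> \<exists>d\<ge>0. (D has_real_derivative d) (at y)"
    and x: "x \<in> {a..b}"
  shows "D x \<le> 0"
proof (rule ccontr)
  assume "\<not> D x \<le> 0"
  then have Dx: "D x > 0" by simp
  define S where "S = {x..b} \<inter> D -` {..0}"
  have "closed S"
  proof -
    have "continuous_on {x..b} D" by (rule continuous_on_subset[OF cont]) (use x in auto)
    then have "closedin (top_of_set {x..b}) S"
      unfolding S_def by (intro continuous_closedin_preimage) auto
    then show ?thesis using closedin_closed_trans by blast
  qed
  moreover have "b \<in> S" using Db x by (auto simp: S_def)
  moreover have bdd: "bdd_below S" unfolding S_def by (rule bdd_belowI[of _ x]) auto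
  ultimately have "Inf S \<in> S" using closed_contains_Inf by blast
  define x1 where "x1 = Inf S"
  have x1: "x \<le> x1" "x1 \<le> b" "D x1 \<le> 0" using \<open>Inf S \<in> S\<close> by (auto simp: S_def x1_def)
  have pos: "D y > 0" if "x \<le> y" "y < x1" for y
  proof (rule ccontr)
    assume "\<not> D y > 0"
    then have "y \<in> S" using that x1 by (auto simp: S_def)
    then show False using cInf_lower[OF _ bdd, of y] that by (auto simp: x1_def)
  qed
  have "D x \<le> D x1"
  proof (rule DERIV_nonneg_imp_increasing_open[of x x1 D])
    show "x \<le> x1" by fact
    show "continuous_on {x..x1} D" by (rule continuous_on_subset[OF cont]) (use x x1 in auto)
    fix y assume "x < y" "y < x1"
    then show "\<exists>d. (D has_real_derivative d) (at y) \<and> d \<ge> 0"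
      using deriv[of y] pos[of y] x x1 by auto
  qed
  then show False using Dx x1 by linarith
qed

lemma cond_q_nonneg:
  assumes "cond_q q" and "x \<in> {0..1}"
  shows "q x \<ge> 0"
  using assms by (cases "x = 0 \<or> x = 1") (auto simp: cond_q_def less_imp_le)

lemma is_sol_has_derivative:
  assumes "is_sol h q c z" and "x \<in> {0<..<1}"
  shows "(z has_real_derivative h x - c - q x / z x) (at x)"
  using assms by (simp add: is_sol_def)

lemma is_sol_mono:
  assumes q: "cond_q q" and z1: "is_sol h q c1 z1" and z2: "is_sol h q c2 z2"
    and c: "c1 \<le> c2" and x: "x \<in> {0..1}"
  shows "z1 x \<le> z2 x"
proof -
  have "z1 x - z2 x \<le> 0"
  proof (rule nonpos_from_right_endpoint[where D = "\<lambda>x. z1 x - z2 x", OF _ _ _ x])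
    show "continuous_on {0..1} (\<lambda>x. z1 x - z2 x)"
      using z1 z2 by (intro continuous_intros) (auto simp: is_sol_def)
    show "z1 1 - z2 1 \<le> 0" using z1 z2 by (simp add: is_sol_def)
    fix y assume y: "y \<in> {0<..<1}" and "z1 y - z2 y > 0"
    moreover have "z1 y < 0" "z2 y < 0" using z1 z2 y by (auto simp: is_sol_def)
    ultimately have "q y / z1 y \<le> q y / z2 y"
      using cond_q_nonneg[OF q, of y] y by (intro divide_left_mono) (auto intro: mult_neg_neg)
    then show "\<exists>d\<ge>0. ((\<lambda>x. z1 x - z2 x) has_real_derivative d) (at y)"
      using DERIV_diff[OF is_sol_has_derivative[OF z1 y] is_sol_has_derivative[OF z2 y]] c
      by (intro exI[of _ "(h y - c1 - q y / z1 y) - (h y - c2 - q y / z2 y)"]) auto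
  qed
  then show ?thesis by linarith
qed

lemma is_sol_shifted_le:
  assumes q: "cond_q q" and z1: "is_sol h q c1 z1" and z2: "is_sol h q c2 z2"
    and c: "c1 \<le> c2" and x: "x \<in> {0..1}"
  shows "z2 x - (c2 - c1) * (1 - x) \<le> z1 x"
proof -
  let ?D = "\<lambda>x. z2 x - (c2 - c1) * (1 - x) - z1 x"
  have "?D x \<le> 0"
  proof (rule nonpos_from_right_endpoint[where D = ?D, OF _ _ _ x])
    show "continuous_on {0..1} ?D"
      using z1 z2 by (intro continuous_intros) (auto simp: is_sol_def)
    show "?D 1 \<le> 0" using z1 z2 by (simp add: is_sol_def)
    fix y assume y: "y \<in> {0<..<1}" and "?D y > 0"
    moreover have "z1 y < 0" "z2 y < 0" using z1 z2 y by (auto simp: is_sol_def)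
    moreover have "(c2 - c1) * (1 - y) \<ge> 0" using c y by simp
    ultimately have "q y / z2 y \<le> q y / z1 y"
      using cond_q_nonneg[OF q, of y] y by (intro divide_left_mono) (auto intro: mult_neg_neg)
    moreover have "(?D has_real_derivative q y / z1 y - q y / z2 y) (at y)"
      using is_sol_has_derivative[OF z1 y] is_sol_has_derivative[OF z2 y]
      by (auto intro!: derivative_eq_intros)
    ultimately show "\<exists>d\<ge>0. (?D has_real_derivative d) (at y)"
      by (intro exI[of _ "q y / z1 y - q y / z2 y"]) auto
  qed
  then show ?thesis by linarith
qed

lemma is_sol_unique:
  assumes "cond_q q" and "is_sol h q c z1" and "is_sol h q c z2" and "x \<in> {0..1}"
  shows "z1 x = z2 x"
  using is_sol_mono[OF assms(1,2,3) _ assms(4)] is_sol_mono[OF assms(1,3,2) _ assms(4)] by force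

lemma is_sol_dist_le:
  assumes q: "cond_q q" and z1: "is_sol h q c1 z1" and z2: "is_sol h q c2 z2" and x: "x \<in> {0..1}"
  shows "\<bar>z1 x - z2 x\<bar> \<le> \<bar>c1 - c2\<bar>"
proof -
  have *: "\<bar>za x - zb x\<bar> \<le> cb - ca"
    if za: "is_sol h q ca za" and zb: "is_sol h q cb zb" and c: "ca \<le> cb" for ca cb za zb
  proof -
    have "za x \<le> zb x" by (rule is_sol_mono[OF q za zb c x])
    moreover have "zb x - (cb - ca) * (1 - x) \<le> za x" by (rule is_sol_shifted_le[OF q za zb c x])
    moreover have "(cb - ca) * (1 - x) \<le> cb - ca" using c x by (simp add: mult_left_le)
    ultimately show ?thesis by linarith
  qed
  show ?thesis using *[OF z1 z2] *[OF z2 z1] by (cases "c1 \<le> c2") (auto simp: abs_minus_commute)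
qed

text \<open>Where two solutions touch, their difference has derivative \<open>c2 - c1 > 0\<close>, so it becomes
  positive just to the right, against \<open>is_sol_mono\<close>.\<close>
lemma is_sol_strict_mono:
  assumes q: "cond_q q" and z1: "is_sol h q c1 z1" and z2: "is_sol h q c2 z2"
    and c: "c1 < c2" and x: "x \<in> {0<..<1}"
  shows "z1 x < z2 x"
proof (rule ccontr)
  assume "\<not> z1 x < z2 x"
  moreover have "z1 x \<le> z2 x" using is_sol_mono[OF q z1 z2] c x by auto
  ultimately have eq: "z1 x = z2 x" by simp
  have "((\<lambda>y. z1 y - z2 y) has_real_derivative c2 - c1) (at x)"
    using DERIV_diff[OF is_sol_has_derivative[OF z1 x] is_sol_has_derivative[OF z2 x]] eq by simp
  from DERIV_pos_inc_right[OF this] c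
  obtain d where d: "d > 0" "\<And>t. t > 0 \<Longrightarrow> t < d \<Longrightarrow> z1 x - z2 x < z1 (x + t) - z2 (x + t)"
    by auto
  define m where "m = min d (1 - x)"
  have "0 < m" "m \<le> d" "m \<le> 1 - x" using d(1) x by (auto simp: m_def)
  then have t: "m / 2 > 0" "m / 2 < d" "x + m / 2 \<in> {0..1}" using x by auto
  have "z1 (x + m / 2) \<le> z2 (x + m / 2)" using is_sol_mono[OF q z1 z2] c t(3) by auto
  then show False using d(2)[OF t(1,2)] eq by simp
qed

section \<open>Picard iteration for the backward integral equation\<close>

lemma continuous_on_if_neg_integral_to_1:
  fixes G y :: "real \<Rightarrow> real"
  assumes G: "G integrable_on {0..1}" and y: "\<And>x. x \<in> {0..1} \<Longrightarrow> y x = - integral {x..1} G"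
  shows "continuous_on {0..1} y"
proof -
  have "continuous_on {0..1} (\<lambda>x. - integral {x..1} G)"
    using indefinite_integral_continuous_1'[OF G] by (intro continuous_intros)
  then show ?thesis by (rule continuous_on_eq) (simp add: y)
qed

lemma has_real_derivative_if_neg_integral_to_1:
  fixes G y :: "real \<Rightarrow> real"
  assumes G: "G integrable_on {0..1}" and y: "\<And>x. x \<in> {0..1} \<Longrightarrow> y x = - integral {x..1} G"
    and x: "x \<in> {0<..<1}" and cont: "isCont G x"
  shows "(y has_real_derivative G x) (at x)"
proof -
  have "((\<lambda>u. integral {0..u} G) has_vector_derivative G x) (at x within ({0..1} - {}))"
    using x cont by (intro integral_has_vector_derivative_continuous_at[OF G])
      (auto simp: isCont_def continuous_at_imp_continuous_at_within)
  moreover have "at x within ({0..1} - {}) = at x"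
    using x by (intro at_within_interior) auto
  ultimately have "((\<lambda>u. integral {0..u} G - integral {0..1} G) has_real_derivative G x) (at x)"
    by (auto simp: has_real_derivative_iff_has_vector_derivative intro!: derivative_eq_intros)
  then show ?thesis
  proof (rule has_field_derivative_transform_within_open)
    fix u :: real assume u: "u \<in> {0<..<1}"
    have "integral {0..u} G + integral {u..1} G = integral {0..1} G"
      using u by (intro Henstock_Kurzweil_Integration.integral_combine[OF _ _ G]) auto
    then show "integral {0..u} G - integral {0..1} G = y u" using y u by auto
  qed (use x in auto)
qed

lemma has_integral_one_minus_power:
  fixes x :: real
  assumes "x \<le> 1"
  shows "((\<lambda>s. (1 - s) ^ m) has_integral (1 - x) ^ Suc m / Suc m) {x..1}"
proof -
  have "((\<lambda>s. - ((1 - s) ^ Suc m) / Suc m) has_vector_derivative (1 - s) ^ m) (at s within {x..1})" for s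
    unfolding has_real_derivative_iff_has_vector_derivative[symmetric]
    by (rule derivative_eq_intros refl | simp)+
  from fundamental_theorem_of_calculus[OF assms this] show ?thesis by simp
qed

locale backward_picard =
  fixes F :: "real \<Rightarrow> real \<Rightarrow> real" and L B :: real
  assumes lipschitz: "\<And>s y1 y2. s \<in> {0..1} \<Longrightarrow> \<bar>F s y1 - F s y2\<bar> \<le> L * \<bar>y1 - y2\<bar>"
    and bounded: "\<And>s y. s \<in> {0..1} \<Longrightarrow> \<bar>F s y\<bar> \<le> B"
    and continuous: "\<And>y. continuous_on {0..1} y \<Longrightarrow> continuous_on {0..1} (\<lambda>s. F s (y s))"
begin

lemma L_nonneg: "L \<ge> 0"
  using lipschitz[of 0 1 0] by simp

lemma B_nonneg: "B \<ge> 0"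
  using bounded[of 0 0] by simp

fun iterate :: "nat \<Rightarrow> real \<Rightarrow> real" where
  "iterate 0 = (\<lambda>x. 0)"
| "iterate (Suc n) = (\<lambda>x. - integral {x..1} (\<lambda>s. F s (iterate n s)))"

declare iterate.simps(2) [simp del]

lemma iterate_continuous: "continuous_on {0..1} (iterate n)"
proof (induction n)
  case (Suc n)
  have "(\<lambda>s. F s (iterate n s)) integrable_on {0..1}"
    using continuous[OF Suc] by (rule integrable_continuous_interval)
  then show ?case
    using indefinite_integral_continuous_1' by (auto simp: iterate.simps intro!: continuous_intros)
qed simp

lemma iterate_integrable:
  assumes "x \<in> {0..1}"
  shows "(\<lambda>s. F s (iterate n s)) integrable_on {x..1}"
  using continuous_on_subset[OF continuous[OF iterate_continuous[of n]], of "{x..1}"] assms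
  by (intro integrable_continuous_interval) auto

lemma iterate_step_bound:
  assumes "x \<in> {0..1}"
  shows "\<bar>iterate (Suc n) x - iterate n x\<bar> \<le> B * L ^ n * (1 - x) ^ Suc n / fact (Suc n)"
  using assms
proof (induction n arbitrary: x)
  case 0
  have "norm (integral {x..1} (\<lambda>s. F s 0)) \<le> integral {x..1} (\<lambda>s. B)"
    using 0 iterate_integrable[of x 0] bounded by (intro integral_norm_bound_integral) auto
  then show ?case using 0 by (simp add: iterate.simps mult.commute)
next
  case (Suc n)
  let ?C = "L * (B * L ^ n / fact (Suc n))"
  have power_integral:
    "((\<lambda>s. ?C * (1 - s) ^ Suc n) has_integral ?C * ((1 - x) ^ Suc (Suc n) / Suc (Suc n))) {x..1}"
    by (rule has_integral_mult_right[OF has_integral_one_minus_power]) (use Suc.prems in auto)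
  have "\<bar>iterate (Suc (Suc n)) x - iterate (Suc n) x\<bar>
      = \<bar>integral {x..1} (\<lambda>s. F s (iterate (Suc n) s)) - integral {x..1} (\<lambda>s. F s (iterate n s))\<bar>"
    by (simp only: iterate.simps(2))
  also have "\<dots> = norm (integral {x..1} (\<lambda>s. F s (iterate (Suc n) s) - F s (iterate n s)))"
    using iterate_integrable[OF Suc.prems] by (simp add: integral_diff)
  also have "\<dots> \<le> integral {x..1} (\<lambda>s. ?C * (1 - s) ^ Suc n)"
  proof (rule integral_norm_bound_integral)
    show "(\<lambda>s. F s (iterate (Suc n) s) - F s (iterate n s)) integrable_on {x..1}"
      using Suc.prems iterate_integrable by (intro integrable_diff) auto
    show "(\<lambda>s. ?C * (1 - s) ^ Suc n) integrable_on {x..1}"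
      using power_integral by blast
    fix s assume s: "s \<in> {x..1}"
    then have s01: "s \<in> {0..1}" using Suc.prems by auto
    have "norm (F s (iterate (Suc n) s) - F s (iterate n s)) \<le> L * \<bar>iterate (Suc n) s - iterate n s\<bar>"
      using lipschitz s01 by simp
    also have "\<dots> \<le> L * (B * L ^ n * (1 - s) ^ Suc n / fact (Suc n))"
      using Suc.IH[OF s01] L_nonneg by (rule mult_left_mono)
    finally show "norm (F s (iterate (Suc n) s) - F s (iterate n s)) \<le> ?C * (1 - s) ^ Suc n"
      by (simp add: field_simps)
  qed
  also have "\<dots> = ?C * ((1 - x) ^ Suc (Suc n) / Suc (Suc n))"
    using power_integral by (rule integral_unique)
  also have "\<dots> = B * L ^ Suc n * (1 - x) ^ Suc (Suc n) / fact (Suc (Suc n))"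
    by (simp add: field_simps)
  finally show ?case .
qed

lemma iterate_convergent:
  assumes x: "x \<in> {0..1}"
  shows "convergent (\<lambda>n. iterate n x)"
proof -
  have step: "norm (iterate (Suc n) x - iterate n x) \<le> B * (inverse (fact n) * L ^ n)" for n
  proof -
    have "(1 - x) ^ Suc n \<le> 1" using x by (intro power_le_one) auto
    moreover have "fact n \<le> (fact (Suc n) :: real)" by (rule fact_mono) auto
    ultimately have "B * L ^ n * (1 - x) ^ Suc n / fact (Suc n) \<le> B * L ^ n * 1 / fact n"
      using B_nonneg L_nonneg by (intro frac_le mult_left_mono) auto
    then show ?thesis using iterate_step_bound[OF x, of n] by (simp add: divide_inverse mult_ac)
  qed
  have "summable (\<lambda>n. iterate (Suc n) x - iterate n x)"
    by (rule summable_comparison_test[OF _ summable_mult[OF summable_exp]]) (use step in auto)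
  then have "(\<lambda>m. \<Sum>n<m. iterate (Suc n) x - iterate n x) \<longlonglongrightarrow> (\<Sum>n. iterate (Suc n) x - iterate n x)"
    by (rule summable_LIMSEQ)
  then have "(\<lambda>m. iterate m x - iterate 0 x) \<longlonglongrightarrow> (\<Sum>n. iterate (Suc n) x - iterate n x)"
    by (simp only: sum_lessThan_telescope[of "\<lambda>n. iterate n x"])
  then show ?thesis by (auto intro: convergentI)
qed

lemma fixed_point_exists:
  "\<exists>y. continuous_on {0..1} y \<and> (\<forall>x\<in>{0..1}. y x = - integral {x..1} (\<lambda>s. F s (y s)))"
proof -
  define y where "y x = lim (\<lambda>n. iterate n x)" for x
  have iterate_tendsto: "(\<lambda>n. iterate n x) \<longlonglongrightarrow> y x" if "x \<in> {0..1}" for x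
    using iterate_convergent[OF that] by (simp add: y_def convergent_LIMSEQ_iff)
  have F_tendsto: "(\<lambda>n. F s (iterate n s)) \<longlonglongrightarrow> F s (y s)" if s: "s \<in> {0..1}" for s
  proof -
    have "(\<lambda>n. L * \<bar>iterate n s - y s\<bar>) \<longlonglongrightarrow> L * \<bar>y s - y s\<bar>"
      using iterate_tendsto[OF s] by (intro tendsto_intros)
    then have bound_tendsto: "(\<lambda>n. L * \<bar>iterate n s - y s\<bar>) \<longlonglongrightarrow> 0" by simp
    have "norm (F s (iterate n s) - F s (y s)) \<le> L * \<bar>iterate n s - y s\<bar>" for n
      using lipschitz[OF s] by (simp only: real_norm_def)
    then have "\<forall>\<^sub>F n in sequentially. norm (F s (iterate n s) - F s (y s)) \<le> L * \<bar>iterate n s - y s\<bar>"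
      by (simp add: always_eventually)
    from Lim_null_comparison[OF this bound_tendsto] show ?thesis by (simp add: LIM_zero_iff)
  qed
  have y_eq: "(\<lambda>s. F s (y s)) integrable_on {x..1} \<and> y x = - integral {x..1} (\<lambda>s. F s (y s))"
    if x: "x \<in> {0..1}" for x
  proof -
    have sub: "{x..1} \<subseteq> {0..1}" using x by auto
    have le: "\<And>n s. s \<in> {x..1} \<Longrightarrow> norm (F s (iterate n s)) \<le> B" using bounded sub by auto
    have cv: "\<And>s. s \<in> {x..1} \<Longrightarrow> (\<lambda>n. F s (iterate n s)) \<longlonglongrightarrow> F s (y s)"
      using F_tendsto sub by auto
    note dominated = dominated_convergence[OF iterate_integrable[OF x] integrable_const_ivl le cv]
    have "(\<lambda>n. iterate (Suc n) x) \<longlonglongrightarrow> - integral {x..1} (\<lambda>s. F s (y s))"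
      using tendsto_minus[OF dominated(2)] by (simp add: iterate.simps)
    moreover have "(\<lambda>n. iterate (Suc n) x) \<longlonglongrightarrow> y x" using iterate_tendsto[OF x] by (rule LIMSEQ_Suc)
    ultimately show ?thesis using dominated(1) LIMSEQ_unique by blast
  qed
  have "continuous_on {0..1} y"
    by (rule continuous_on_if_neg_integral_to_1[of "\<lambda>s. F s (y s)"]) (use y_eq[of 0] y_eq in auto)
  then show ?thesis using y_eq by blast
qed

end

section \<open>Existence below a supersolution\<close>

lemma abs_divide_diff_le:
  fixes a m1 m2 d Q :: real
  assumes "m1 \<le> - d" "m2 \<le> - d" "d > 0" "\<bar>a\<bar> \<le> Q"
  shows "\<bar>a / m1 - a / m2\<bar> \<le> Q / d\<^sup>2 * \<bar>m1 - m2\<bar>"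
proof -
  have "m1 \<noteq> 0" "m2 \<noteq> 0" using assms by auto
  then have "a / m1 - a / m2 = a * (m2 - m1) / (m1 * m2)" by (simp add: field_simps)
  then have "\<bar>a / m1 - a / m2\<bar> = \<bar>a\<bar> * \<bar>m1 - m2\<bar> / (\<bar>m1\<bar> * \<bar>m2\<bar>)"
    by (simp add: abs_mult abs_minus_commute)
  also have "\<dots> \<le> Q * \<bar>m1 - m2\<bar> / (d * d)"
  proof (rule frac_le)
    show "0 \<le> Q * \<bar>m1 - m2\<bar>" using assms by simp
    show "\<bar>a\<bar> * \<bar>m1 - m2\<bar> \<le> Q * \<bar>m1 - m2\<bar>" using assms by (intro mult_right_mono) auto
    show "0 < d * d" using assms by simp
    show "d * d \<le> \<bar>m1\<bar> * \<bar>m2\<bar>" using assms by (intro mult_mono) auto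
  qed
  finally show ?thesis by (simp add: power2_eq_square)
qed

lemma abs_divide_le_if_le_neg:
  fixes a m d Q :: real
  assumes "m \<le> - d" "d > 0" "\<bar>a\<bar> \<le> Q"
  shows "\<bar>a / m\<bar> \<le> Q / d"
proof -
  have "\<bar>a / m\<bar> = \<bar>a\<bar> / \<bar>m\<bar>" by (rule abs_divide)
  also have "\<dots> \<le> Q / d" using assms by (intro frac_le) auto
  finally show ?thesis .
qed

locale supersolution_truncation =
  fixes h q zs :: "real \<Rightarrow> real" and cs c :: real
  assumes h_continuous: "continuous_on {0..1} h" and q: "cond_q q"
    and zs: "is_sol h q cs zs" and below: "c < cs"
begin

definition \<delta> :: "nat \<Rightarrow> real" where
  "\<delta> n = 1 / real (Suc n)"

text \<open>Capping the denominator at \<open>min (zs s) (- \<delta> n)\<close> keeps the singular term \<open>q / z\<close> away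
  from \<open>z = 0\<close>, so the truncated equation is globally Lipschitz; as \<open>n \<rightarrow> \<infinity>\<close> the cap relaxes
  to the supersolution \<open>zs\<close>.\<close>
definition cap :: "nat \<Rightarrow> real \<Rightarrow> real" where
  "cap n s = min (zs s) (- \<delta> n)"

definition rhs :: "nat \<Rightarrow> real \<Rightarrow> real \<Rightarrow> real" where
  "rhs n s y = h s - c - q s / min y (cap n s)"

definition w :: "nat \<Rightarrow> real \<Rightarrow> real" where
  "w n = (SOME w. continuous_on {0..1} w \<and> (\<forall>x\<in>{0..1}. w x = - integral {x..1} (\<lambda>s. rhs n s (w s))))"

lemma \<delta>_pos: "\<delta> n > 0"
  by (simp add: \<delta>_def)

lemma \<delta>_Suc_le: "\<delta> (Suc n) \<le> \<delta> n"
  by (simp add: \<delta>_def frac_le)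

lemma min_cap_le: "min y (cap n s) \<le> - \<delta> n"
  by (simp add: cap_def)

lemma min_cap_neg: "min y (cap n s) < 0"
  using min_cap_le[of y n s] \<delta>_pos[of n] by linarith

lemma q_continuous: "continuous_on {0..1} q"
  using q by (simp add: cond_q_def)

lemma q_nonneg: "s \<in> {0..1} \<Longrightarrow> q s \<ge> 0"
  by (rule cond_q_nonneg[OF q])

lemma q_endpoints: "s \<in> {0..1} \<Longrightarrow> s \<notin> {0<..<1} \<Longrightarrow> q s = 0"
  using q by (cases "s = 0") (auto simp: cond_q_def)

lemma zs_continuous: "continuous_on {0..1} zs"
  using zs by (simp add: is_sol_def)

lemma zs_neg: "s \<in> {0<..<1} \<Longrightarrow> zs s < 0"
  using zs by (simp add: is_sol_def)

lemma rhs_continuous: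
  assumes "continuous_on {0..1} y"
  shows "continuous_on {0..1} (\<lambda>s. rhs n s (y s))"
proof -
  have "continuous_on {0..1} (cap n)" unfolding cap_def using zs_continuous by (intro continuous_intros)
  then show ?thesis
    unfolding rhs_def using h_continuous q_continuous assms min_cap_neg
    by (intro continuous_intros) (auto simp: less_imp_neq)
qed

lemma rhs_backward_picard: "\<exists>L B. backward_picard (rhs n) L B"
proof -
  obtain Q where "\<forall>s\<in>{0..1}. \<bar>q s\<bar> \<le> Q"
    using compact_imp_bounded[OF compact_continuous_image[OF q_continuous compact_Icc]]
    by (auto simp: bounded_iff)
  then have Q: "\<And>s. s \<in> {0..1} \<Longrightarrow> \<bar>q s\<bar> \<le> Q" by blast
  have "continuous_on {0..1} (\<lambda>s. h s - c)" using h_continuous by (intro continuous_intros)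
  from compact_imp_bounded[OF compact_continuous_image[OF this compact_Icc]]
  obtain H where "\<forall>s\<in>{0..1}. \<bar>h s - c\<bar> \<le> H"
    by (auto simp: bounded_iff)
  then have H: "\<And>s. s \<in> {0..1} \<Longrightarrow> \<bar>h s - c\<bar> \<le> H" by blast
  have "backward_picard (rhs n) (Q / (\<delta> n)\<^sup>2) (H + Q / \<delta> n)"
  proof
    fix s y1 y2 :: real assume s: "s \<in> {0..1}"
    have "\<bar>rhs n s y1 - rhs n s y2\<bar> = \<bar>q s / min y2 (cap n s) - q s / min y1 (cap n s)\<bar>"
      by (simp add: rhs_def)
    also have "\<dots> \<le> Q / (\<delta> n)\<^sup>2 * \<bar>min y2 (cap n s) - min y1 (cap n s)\<bar>"
      by (rule abs_divide_diff_le[OF min_cap_le min_cap_le \<delta>_pos Q[OF s]])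
    also have "\<dots> \<le> Q / (\<delta> n)\<^sup>2 * \<bar>y1 - y2\<bar>"
      using Q[OF s] by (intro mult_left_mono) (auto simp: min_def)
    finally show "\<bar>rhs n s y1 - rhs n s y2\<bar> \<le> Q / (\<delta> n)\<^sup>2 * \<bar>y1 - y2\<bar>" .
  next
    fix s y :: real assume s: "s \<in> {0..1}"
    have "\<bar>q s / min y (cap n s)\<bar> \<le> Q / \<delta> n"
      by (rule abs_divide_le_if_le_neg[OF min_cap_le \<delta>_pos Q[OF s]])
    moreover have "\<bar>rhs n s y\<bar> \<le> \<bar>h s - c\<bar> + \<bar>q s / min y (cap n s)\<bar>"
      unfolding rhs_def by (rule abs_triangle_ineq4)
    ultimately show "\<bar>rhs n s y\<bar> \<le> H + Q / \<delta> n" using H[OF s] by linarith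
  qed (rule rhs_continuous)
  then show ?thesis by blast
qed

lemma w_spec: "continuous_on {0..1} (w n) \<and> (\<forall>x\<in>{0..1}. w n x = - integral {x..1} (\<lambda>s. rhs n s (w n s)))"
proof -
  obtain L B where "backward_picard (rhs n) L B" using rhs_backward_picard by blast
  then have "\<exists>w. continuous_on {0..1} w \<and> (\<forall>x\<in>{0..1}. w x = - integral {x..1} (\<lambda>s. rhs n s (w s)))"
    by (rule backward_picard.fixed_point_exists)
  then show ?thesis unfolding w_def by (rule someI_ex)
qed

lemma w_continuous: "continuous_on {0..1} (w n)"
  using w_spec by blast

lemma w_eq: "x \<in> {0..1} \<Longrightarrow> w n x = - integral {x..1} (\<lambda>s. rhs n s (w n s))"
  using w_spec by blast

lemma w_at_1: "w n 1 = 0"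
  using w_eq[of 1 n] by simp

lemma rhs_w_continuous: "continuous_on {0..1} (\<lambda>s. rhs n s (w n s))"
  by (rule rhs_continuous[OF w_continuous])

lemma w_has_derivative:
  assumes x: "x \<in> {0<..<1}"
  shows "(w n has_real_derivative rhs n x (w n x)) (at x)"
proof (rule has_real_derivative_if_neg_integral_to_1[OF _ w_eq x])
  show "(\<lambda>s. rhs n s (w n s)) integrable_on {0..1}"
    using rhs_w_continuous by (rule integrable_continuous_interval)
  show "isCont (\<lambda>s. rhs n s (w n s)) x"
    using continuous_on_interior[OF rhs_w_continuous] x by (simp add: interior_atLeastAtMost_real)
qed

lemma w_Suc_le:
  assumes x: "x \<in> {0..1}"
  shows "w (Suc n) x \<le> w n x"
proof -
  let ?D = "\<lambda>x. w (Suc n) x - w n x"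
  have "?D x \<le> 0"
  proof (rule nonpos_from_right_endpoint[where D = ?D, OF _ _ _ x])
    show "continuous_on {0..1} ?D" using w_continuous by (intro continuous_intros)
    show "?D 1 \<le> 0" by (simp add: w_at_1)
    fix y :: real assume y: "y \<in> {0<..<1}" and "?D y > 0"
    then have "min (w n y) (cap n y) \<le> min (w (Suc n) y) (cap (Suc n) y)"
      using \<delta>_Suc_le[of n] by (auto simp: cap_def min_def)
    then have "q y / min (w (Suc n) y) (cap (Suc n) y) \<le> q y / min (w n y) (cap n y)"
      using q_nonneg[of y] y min_cap_neg by (intro divide_left_mono mult_neg_neg) auto
    then show "\<exists>d\<ge>0. (?D has_real_derivative d) (at y)"
      using DERIV_diff[OF w_has_derivative[OF y, of "Suc n"] w_has_derivative[OF y, of n]]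
      by (intro exI[of _ "rhs (Suc n) y (w (Suc n) y) - rhs n y (w n y)"]) (simp add: rhs_def)
  qed
  then show ?thesis by linarith
qed

lemma w_lower_bound:
  assumes x: "x \<in> {0..1}"
  shows "zs x - (cs - c) * (1 - x) \<le> w n x"
proof -
  let ?D = "\<lambda>x. zs x - (cs - c) * (1 - x) - w n x"
  have "?D x \<le> 0"
  proof (rule nonpos_from_right_endpoint[where D = ?D, OF _ _ _ x])
    show "continuous_on {0..1} ?D" using zs_continuous w_continuous by (intro continuous_intros)
    show "?D 1 \<le> 0" using zs by (simp add: w_at_1 is_sol_def)
    fix y :: real assume y: "y \<in> {0<..<1}"
    have "min (w n y) (cap n y) \<le> zs y" by (simp add: cap_def)
    then have "q y / zs y \<le> q y / min (w n y) (cap n y)"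
      using q_nonneg[of y] y zs_neg[OF y] min_cap_neg by (intro divide_left_mono mult_neg_neg) auto
    moreover have "(?D has_real_derivative q y / min (w n y) (cap n y) - q y / zs y) (at y)"
      using is_sol_has_derivative[OF zs y] w_has_derivative[OF y, of n]
      by (auto simp: rhs_def intro!: derivative_eq_intros)
    ultimately show "\<exists>d\<ge>0. (?D has_real_derivative d) (at y)"
      by (intro exI[of _ "q y / min (w n y) (cap n y) - q y / zs y"]) simp
  qed
  then show ?thesis by linarith
qed

definition z :: "real \<Rightarrow> real" where
  "z x = lim (\<lambda>n. w n x)"

lemma w_tendsto:
  assumes x: "x \<in> {0..1}"
  shows "(\<lambda>n. w n x) \<longlonglongrightarrow> z x"
proof -
  have "decseq (\<lambda>n. w n x)" using w_Suc_le[OF x] by (simp add: decseq_Suc_iff)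
  moreover have "bdd_below (range (\<lambda>n. w n x))"
    using w_lower_bound[OF x] by (intro bdd_belowI[of _ "zs x - (cs - c) * (1 - x)"]) auto
  ultimately have "convergent (\<lambda>n. w n x)" using LIMSEQ_decseq_INF convergent_def by blast
  then show ?thesis by (simp add: z_def convergent_LIMSEQ_iff)
qed

definition G :: "real \<Rightarrow> real" where
  "G s = h s - c - q s / min (z s) (zs s)"

lemma rhs_w_tendsto:
  assumes s: "s \<in> {0..1}"
  shows "(\<lambda>n. rhs n s (w n s)) \<longlonglongrightarrow> G s"
proof (cases "s \<in> {0<..<1}")
  case True
  have "(\<lambda>n. cap n s) \<longlonglongrightarrow> min (zs s) (- 0)"
    unfolding cap_def \<delta>_def using LIMSEQ_inverse_real_of_nat
    by (intro tendsto_intros) (simp add: inverse_eq_divide)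
  then have "(\<lambda>n. cap n s) \<longlonglongrightarrow> zs s" using zs_neg[OF True] by simp
  from tendsto_min[OF w_tendsto[OF s] this]
  have "(\<lambda>n. min (w n s) (cap n s)) \<longlonglongrightarrow> min (z s) (zs s)" .
  moreover have "min (z s) (zs s) \<noteq> 0" using zs_neg[OF True] by linarith
  ultimately show ?thesis
    unfolding rhs_def G_def by (intro tendsto_diff tendsto_const tendsto_divide)
next
  case False
  then show ?thesis using q_endpoints[OF s] by (simp add: rhs_def G_def)
qed

lemma rhs_dominated:
  assumes s: "s \<in> {0..1}"
  shows "\<bar>rhs n s y\<bar> \<le> \<bar>h s - c\<bar> - q s / zs s"
proof (cases "s \<in> {0<..<1}")
  case True
  have "min y (cap n s) \<le> zs s" by (simp add: cap_def)
  then have "q s / zs s \<le> q s / min y (cap n s)"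
    using q_nonneg[OF s] zs_neg[OF True] min_cap_neg by (intro divide_left_mono mult_neg_neg) auto
  moreover have "q s / min y (cap n s) \<le> 0"
    using q_nonneg[OF s] min_cap_neg by (simp add: divide_nonneg_neg)
  moreover have "\<bar>rhs n s y\<bar> \<le> \<bar>h s - c\<bar> + \<bar>q s / min y (cap n s)\<bar>"
    unfolding rhs_def by (rule abs_triangle_ineq4)
  ultimately show ?thesis by linarith
next
  case False
  then show ?thesis using q_endpoints[OF s] by (simp add: rhs_def)
qed

lemma dominating_integrable: "(\<lambda>s. \<bar>h s - c\<bar> - q s / zs s) integrable_on {0..1}"
proof -
  have "((\<lambda>s. h s - cs - q s / zs s) has_integral zs 1 - zs 0) {0..1}"
    using zs_continuous is_sol_has_derivative[OF zs]
    by (intro fundamental_theorem_of_calculus_interior)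
      (auto simp: has_real_derivative_iff_has_vector_derivative[symmetric])
  then have "(\<lambda>s. h s - cs - q s / zs s) integrable_on {0..1}" by blast
  moreover have "(\<lambda>s. \<bar>h s - c\<bar> - (h s - cs)) integrable_on {0..1}"
    using h_continuous by (intro integrable_continuous_interval continuous_intros)
  ultimately have "(\<lambda>s. (\<bar>h s - c\<bar> - (h s - cs)) + (h s - cs - q s / zs s)) integrable_on {0..1}"
    by (intro integrable_add)
  then show ?thesis by simp
qed

lemma G_has_integral:
  assumes x: "x \<in> {0..1}"
  shows "(G has_integral - z x) {x..1}"
proof -
  have sub: "{x..1} \<subseteq> {0..1}" using x by auto
  have integrable: "(\<lambda>s. rhs n s (w n s)) integrable_on {x..1}" for n
    using integrable_continuous_interval[OF rhs_w_continuous] sub by (rule integrable_on_subinterval)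
  have dominating: "(\<lambda>s. \<bar>h s - c\<bar> - q s / zs s) integrable_on {x..1}"
    using dominating_integrable sub by (rule integrable_on_subinterval)
  have bound: "norm (rhs n s (w n s)) \<le> \<bar>h s - c\<bar> - q s / zs s" if "s \<in> {x..1}" for n s
    using rhs_dominated sub that by auto
  have tendsto: "(\<lambda>n. rhs n s (w n s)) \<longlonglongrightarrow> G s" if "s \<in> {x..1}" for s
    using rhs_w_tendsto sub that by auto
  note dominated = dominated_convergence[OF integrable dominating bound tendsto]
  have "(\<lambda>n. w n x) \<longlonglongrightarrow> - integral {x..1} G"
    using tendsto_minus[OF dominated(2)] w_eq[OF x] by simp
  then have "z x = - integral {x..1} G" using w_tendsto[OF x] LIMSEQ_unique by blast
  with dominated(1) show ?thesis by (simp add: has_integral_integral)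
qed

lemma z_eq: "x \<in> {0..1} \<Longrightarrow> z x = - integral {x..1} G"
  using integral_unique[OF G_has_integral] by simp

lemma G_integrable: "G integrable_on {0..1}"
  using has_integral_integrable[OF G_has_integral[of 0]] by simp

lemma z_continuous: "continuous_on {0..1} z"
  using G_integrable z_eq by (rule continuous_on_if_neg_integral_to_1)

lemma G_continuous: "continuous_on {0<..<1} G"
proof -
  have "{0<..<1} \<subseteq> {0..1::real}" by auto
  then have "continuous_on {0<..<1} z" "continuous_on {0<..<1} zs"
    "continuous_on {0<..<1} h" "continuous_on {0<..<1} q"
    using z_continuous zs_continuous h_continuous q_continuous by (auto elim: continuous_on_subset)
  moreover have "\<forall>s\<in>{0<..<1}. min (z s) (zs s) \<noteq> 0" using zs_neg by force
  ultimately show ?thesis unfolding G_def by (intro continuous_intros) auto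
qed

lemma z_has_derivative:
  assumes x: "x \<in> {0<..<1}"
  shows "(z has_real_derivative G x) (at x)"
  using G_integrable z_eq x
proof (rule has_real_derivative_if_neg_integral_to_1)
  show "isCont G x" using G_continuous x by (simp add: continuous_on_eq_continuous_at)
qed

lemma z_le_zs:
  assumes x: "x \<in> {0..1}"
  shows "z x \<le> zs x"
proof -
  have "z x - zs x \<le> 0"
  proof (rule nonpos_from_right_endpoint[where D = "\<lambda>x. z x - zs x", OF _ _ _ x])
    show "continuous_on {0..1} (\<lambda>x. z x - zs x)"
      using z_continuous zs_continuous by (intro continuous_intros)
    show "z 1 - zs 1 \<le> 0" using zs z_eq[of 1] by (simp add: is_sol_def)
    fix y assume y: "y \<in> {0<..<1}" and "z y - zs y > 0"
    then have eq: "G y - (h y - cs - q y / zs y) = cs - c" by (simp add: G_def min_def)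
    have "((\<lambda>x. z x - zs x) has_real_derivative cs - c) (at y)"
      using DERIV_diff[OF z_has_derivative[OF y] is_sol_has_derivative[OF zs y]] unfolding eq .
    then show "\<exists>d\<ge>0. ((\<lambda>x. z x - zs x) has_real_derivative d) (at y)"
      using below by (intro exI[of _ "cs - c"]) auto
  qed
  then show ?thesis by linarith
qed

lemma z_is_sol: "is_sol h q c z"
  unfolding is_sol_def
proof (intro conjI ballI)
  have G_eq: "G x = h x - c - q x / z x" if "x \<in> {0<..<1}" for x
    using z_le_zs that by (simp add: G_def min_def)
  show "continuous_on {0..1} z" by (rule z_continuous)
  show "z 1 = 0" using z_eq[of 1] by simp
  fix x :: real assume x: "x \<in> {0<..<1}"
  show "(z has_real_derivative h x - c - q x / z x) (at x)"
    using z_has_derivative[OF x] G_eq[OF x] by simp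
  show "z x < 0" using z_le_zs[of x] zs_neg[OF x] x by simp
next
  have "continuous_on {0<..<1} (deriv z) \<longleftrightarrow> continuous_on {0<..<1} G"
    using z_has_derivative DERIV_imp_deriv by (intro continuous_on_cong) auto
  then show "continuous_on {0<..<1} (deriv z)" using G_continuous by simp
qed

end

lemma is_sol_exists_below_supersolution:
  assumes "continuous_on {0..1} h" and "cond_q q" and "is_sol h q cs zs" and "c < cs"
  shows "\<exists>z. is_sol h q c z"
proof -
  interpret supersolution_truncation h q zs cs c
    using assms by unfold_locales
  show ?thesis using z_is_sol by blast
qed

lemma is_sol_tendsto:
  assumes q: "cond_q q" and Z: "\<And>c. is_sol h q c (Z c)" and z0: "is_sol h q c0 z0"
    and x: "x \<in> {0..1}"
  shows "((\<lambda>c. Z c x) \<longlongrightarrow> z0 x) (at c0)"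
proof -
  have bound: "\<forall>\<^sub>F c in at c0. norm (Z c x - z0 x) \<le> \<bar>c - c0\<bar>"
    using is_sol_dist_le[OF q Z z0 x] by (simp add: always_eventually)
  have "((\<lambda>c. \<bar>c - c0\<bar>) \<longlongrightarrow> \<bar>c0 - c0\<bar>) (at c0)" by (intro tendsto_intros)
  then have "((\<lambda>c. \<bar>c - c0\<bar>) \<longlongrightarrow> 0) (at c0)" by simp
  with bound have "((\<lambda>c. Z c x - z0 x) \<longlongrightarrow> 0) (at c0)" by (rule Lim_null_comparison)
  then show ?thesis by (simp add: LIM_zero_iff)
qed

text \<open>Only \<open>h\<close> enters the problem.\<close>
theorem lemma6p1:
  fixes f h q :: "real \<Rightarrow> real" and cstar :: real and zstar :: "real \<Rightarrow> real"
  assumes f_C1: "\<forall>x\<in>{0..1}. (f has_real_derivative h x) (at x within {0..1})"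
      and h_cont: "continuous_on {0..1} h"
      and f0: "f 0 = 0"
      and q: "cond_q q"
      and cstar: "\<forall>c. (\<exists>z. is_sol0 h q c z) \<longleftrightarrow> c \<ge> cstar"
      and zstar: "is_sol0 h q cstar zstar"
  shows "\<exists>Z :: real \<Rightarrow> real \<Rightarrow> real.
           (\<forall>c. is_sol h q c (Z c) \<and> (\<forall>z. is_sol h q c z \<longrightarrow> (\<forall>x\<in>{0..1}. z x = Z c x)))
         \<and> (\<forall>c. c \<ge> cstar \<longrightarrow> Z c 0 = 0)
         \<and> (\<forall>c. c < cstar \<longrightarrow> Z c 0 < 0)
         \<and> (\<forall>c1 c2. c2 > c1 \<longrightarrow> (\<forall>x\<in>{0<..<1}. Z c2 x > Z c1 x))
         \<and> (\<forall>x\<in>{0..1}. ((\<lambda>c. Z c x) \<longlongrightarrow> zstar x) (at cstar))"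
proof -
  have zs: "is_sol h q cstar zstar" using zstar by (simp add: is_sol0_def)
  have "\<exists>z. is_sol h q c z" for c
    using is_sol_exists_below_supersolution[OF h_cont q zs, of c] cstar
    by (cases "c < cstar") (auto simp: is_sol0_def)
  then obtain Z where Z: "\<And>c. is_sol h q c (Z c)" by metis
  have Z_0_eq_0: "Z c 0 = 0 \<longleftrightarrow> cstar \<le> c" for c
  proof
    assume "Z c 0 = 0"
    then have "is_sol0 h q c (Z c)" using Z by (simp add: is_sol0_def)
    then show "cstar \<le> c" using cstar by blast
  next
    assume "cstar \<le> c"
    then obtain z where z: "is_sol0 h q c z" using cstar by blast
    then have "is_sol h q c z" by (simp add: is_sol0_def)
    then have "z 0 = Z c 0" by (rule is_sol_unique[OF q _ Z]) simp
    then show "Z c 0 = 0" using z by (simp add: is_sol0_def)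
  qed
  have unique: "\<forall>z. is_sol h q c z \<longrightarrow> (\<forall>x\<in>{0..1}. z x = Z c x)" for c
    using is_sol_unique[OF q _ Z] by blast
  have below: "Z c 0 < 0" if "c < cstar" for c
  proof -
    have "Z c 0 \<le> zstar 0" using is_sol_mono[OF q Z zs] that by simp
    then show ?thesis using Z_0_eq_0[of c] zstar that by (simp add: is_sol0_def)
  qed
  show ?thesis
    using Z unique Z_0_eq_0 below is_sol_strict_mono[OF q Z Z] is_sol_tendsto[OF q Z zs]
    by (intro exI[of _ Z] conjI allI impI ballI) auto
qed

end
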